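(* Let $\mathcal{V},\mathcal{W}$ be real, separable, infinite-dimensional Hilbert spaces, fix $c>0$ and $p\in[1,\infty]$, and let $\mathcal{X}=\{v\in\mathcal{V}:\|v\|\le1\}$, $\mathcal{Y}=\{w\in\mathcal{W}:\|w\|\le c\}$, $\mathcal{F}_p=\{f\in S_p(\mathcal{V},\mathcal{W}):\|f\|_p\le c\}$. Then for every $T\in\mathbb{N}$, \[\inf_{\mathcal{A}}\mathtt{R}_{\mathcal{A}}(T,\mathcal{F}_p)\ge c^2\,T^{1-\frac1p}\] (with $1/p=0$ for $p=\infty$), the infimum being over all (possibly randomized) online learning algorithms. In particular $\mathcal{F}_\infty$ is not online learnable.
   Context: For a compact linear operator $f:\mathcal{V}\to\mathcal{W}$ with singular values $(s_n(f))_{n\ge1}$, $\|f\|_p=(\sum_n s_n(f)^p)^{1/p}$ for $p\in[1,\infty)$ and $\|f\|_\infty=\sup_n s_n(f)$; $S_p(\mathcal{V},\mathcal{W})$ is the set of compact linear operators with $\|f\|_p<\infty$. Online protocol: for $t=1,\dots,T$, an adversary picks $(x_t,y_t)\in\mathcal{X}\times\mathcal{Y}$ and reveals $x_t$; the learner $\mathcal{A}$, using past labeled examples and $x_t$ (and possibly internal randomness), predicts $\mathcal{A}(x_t)\in\mathcal{Y}$; then $y_t$ is revealed, with loss $\|\mathcal{A}(x_t)-y_t\|^2$. The regret is \[\mathtt{R}_{\mathcal{A}}(T,\mathcal{F})=\sup_{(x_1,y_1),\dots,(x_T,y_T)}\mathbb{E}\Big[\sum_{t=1}^T\|\mathcal{A}(x_t)-y_t\|^2-\inf_{f\in\mathcal{F}}\sum_{t=1}^T\|f(x_t)-y_t\|^2\Big].\]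 A class $\mathcal{F}$ is online learnable if some algorithm has regret that is a non-decreasing sublinear function of $T$. *)

theory Defs
  imports "HOL-Analysis.Analysis" "HOL-Probability.Probability"
begin

definition adjoint_op :: "('a::real_inner \<Rightarrow> 'b::real_inner) \<Rightarrow> 'b \<Rightarrow> 'a" where
  "adjoint_op f = (SOME g. \<forall>x y. inner (f x) y = inner x (g y))"

definition compact_op :: "('a::real_normed_vector \<Rightarrow> 'b::real_normed_vector) \<Rightarrow> bool" where
  "compact_op f \<longleftrightarrow> bounded_linear f \<and> compact (closure (f ` cball 0 1))"

definition eigsp_sq :: "('a::real_inner \<Rightarrow> 'b::real_inner) \<Rightarrow> real \<Rightarrow> 'a set" where
  "eigsp_sq f \<mu> = {x. adjoint_op f (f x) = \<mu> *\<^sub>R x}"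

definition sv_count :: "('a::real_inner \<Rightarrow> 'b::real_inner) \<Rightarrow> real \<Rightarrow> nat" where
  "sv_count f t = (\<Sum>\<mu>\<in>{\<mu>. t \<le> \<mu> \<and> (\<exists>x. x \<noteq> 0 \<and> x \<in> eigsp_sq f \<mu>)}. dim (eigsp_sq f \<mu>))"

text \<open>Singular values, nonincreasing and counted with multiplicity (padded with zeros):
  \<open>singular_value f n\<close> is \<open>s_{n+1}(f)\<close>, the square root of the (n+1)-st largest eigenvalue
  of f* f (counted with multiplicity), and 0 if there are fewer than n+1 positive ones.\<close>
definition singular_value :: "('a::real_inner \<Rightarrow> 'b::real_inner) \<Rightarrow> nat \<Rightarrow> real" where
  "singular_value f n = sqrt (Sup ({t. 0 < t \<and> Suc n \<le> sv_count f t} \<union> {0}))"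

definition schatten_norm :: "ereal \<Rightarrow> ('a::real_inner \<Rightarrow> 'b::real_inner) \<Rightarrow> ereal" where
  "schatten_norm p f =
     (if p = \<infinity> then (SUP n. ereal (singular_value f n))
      else if summable (\<lambda>n. singular_value f n powr real_of_ereal p)
      then ereal ((\<Sum>n. singular_value f n powr real_of_ereal p) powr (1 / real_of_ereal p))
      else \<infinity>)"

definition schatten_class :: "ereal \<Rightarrow> ('a::real_inner \<Rightarrow> 'b::real_inner) set" where
  "schatten_class p = {f. compact_op f \<and> schatten_norm p f < \<infinity>}"

definition schatten_ball :: "ereal \<Rightarrow> real \<Rightarrow> ('a::real_inner \<Rightarrow> 'b::real_inner) set" where
  "schatten_ball p c = {f \<in> schatten_class p. schatten_norm p f \<le> ereal c}"

text \<open>A (possibly randomized) online learner: internal randomness \<open>\<omega>\<close> drawn from a probability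
  space M; given the past labelled examples (oldest first) and the current instance, it predicts
  a point of \<open>Y = cball 0 c\<close>; predictions are measurable in \<open>\<omega>\<close>.\<close>
definition online_algorithm ::
  "'r measure \<Rightarrow> real \<Rightarrow> ('r \<Rightarrow> ('v \<times> 'w::real_normed_vector) list \<Rightarrow> 'v \<Rightarrow> 'w) \<Rightarrow> bool" where
  "online_algorithm M c A \<longleftrightarrow>
     (\<forall>h x. (\<lambda>\<omega>. A \<omega> h x) \<in> borel_measurable M \<and> (\<forall>\<omega>\<in>space M. norm (A \<omega> h x) \<le> c))"

definition history :: "(nat \<Rightarrow> 'v) \<Rightarrow> (nat \<Rightarrow> 'w) \<Rightarrow> nat \<Rightarrow> ('v \<times> 'w) list" where
  "history xs ys t = map (\<lambda>i. (xs i, ys i)) [0..<t]"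

text \<open>Regret over T rounds (rounds indexed 0..T-1) against the class F, with
  \<open>X = cball 0 1\<close> and \<open>Y = cball 0 c\<close>.\<close>
definition regret ::
  "'r measure \<Rightarrow> real \<Rightarrow> ('r \<Rightarrow> ('v::real_normed_vector \<times> 'w::real_normed_vector) list \<Rightarrow> 'v \<Rightarrow> 'w)
     \<Rightarrow> nat \<Rightarrow> ('v \<Rightarrow> 'w) set \<Rightarrow> ereal" where
  "regret M c A T F =
     (SUP (xs, ys) \<in> {(xs, ys). \<forall>t<T. norm (xs t) \<le> 1 \<and> norm (ys t) \<le> c}.
        ereal (\<integral>\<omega>. (\<Sum>t<T. (norm (A \<omega> (history xs ys t) (xs t) - ys t))\<^sup>2)
                    - (INF f\<in>F. \<Sum>t<T. (norm (f (xs t) - ys t))\<^sup>2) \<partial>M))"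

definition online_learnable_by ::
  "'r measure \<Rightarrow> real \<Rightarrow> ('v::real_normed_vector \<Rightarrow> 'w::real_normed_vector) set
     \<Rightarrow> ('r \<Rightarrow> ('v \<times> 'w) list \<Rightarrow> 'v \<Rightarrow> 'w) \<Rightarrow> bool" where
  "online_learnable_by M c F A \<longleftrightarrow>
     online_algorithm M c A \<and> mono (\<lambda>T. regret M c A T F)
     \<and> (\<lambda>T. regret M c A T F / ereal (real T)) \<longlonglongrightarrow> 0"

end

theory Submission
  imports Defs
begin

text \<open>
  An adaptive adversary feeds orthonormal instances \<open>e\<^sub>1, \<dots>, e\<^sub>T\<close> and labels \<open>\<sigma>\<^sub>t c u\<^sub>t\<close>
  with orthonormal \<open>u\<^sub>t\<close>, choosing the sign \<open>\<sigma>\<^sub>t = \<plusminus>1\<close> after seeing the history so that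
  the label is not positively correlated with the learner's mean prediction; this forces an
  expected loss of at least \<open>c\<^sup>2\<close> in every round. The operator \<open>f = \<Sum>\<^sub>t b \<sigma>\<^sub>t u\<^sub>t \<langle>e\<^sub>t, \<cdot>\<rangle>\<close>
  has exactly \<open>T\<close> nonzero singular values, all equal to \<open>b\<close>, so for \<open>b = c T\<^sup>-\<^sup>1\<^sup>/\<^sup>p\<close> it lies
  in \<open>F\<^sub>p\<close> and loses only \<open>(c - b)\<^sup>2\<close> per round. Hence the regret is at least
  \<open>T (c\<^sup>2 - (c - b)\<^sup>2) \<ge> T b c = c\<^sup>2 T\<^sup>1\<^sup>-\<^sup>1\<^sup>/\<^sup>p\<close>, which is linear in \<open>T\<close> for \<open>p = \<infinity>\<close>.
\<close>

definition orthonormal_upto :: "nat \<Rightarrow> (nat \<Rightarrow> 'a::real_inner) \<Rightarrow> bool" where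
  "orthonormal_upto n e \<longleftrightarrow> (\<forall>i<n. \<forall>j<n. inner (e i) (e j) = (if i = j then 1 else 0))"

definition finite_rank_op ::
  "nat \<Rightarrow> (nat \<Rightarrow> 'a::real_inner) \<Rightarrow> (nat \<Rightarrow> 'b::real_vector) \<Rightarrow> (nat \<Rightarrow> real) \<Rightarrow> 'a \<Rightarrow> 'b" where
  "finite_rank_op n e u s x = (\<Sum>i<n. (s i * inner (e i) x) *\<^sub>R u i)"

lemma orthonormal_uptoD:
  "orthonormal_upto n e \<Longrightarrow> i < n \<Longrightarrow> j < n \<Longrightarrow> inner (e i) (e j) = (if i = j then 1 else 0)"
  by (simp add: orthonormal_upto_def)

lemma norm_orthonormal_upto: "orthonormal_upto n e \<Longrightarrow> i < n \<Longrightarrow> norm (e i) = 1"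
  by (simp add: norm_eq_sqrt_inner orthonormal_uptoD)

lemma inner_orthonormal_sum:
  assumes "orthonormal_upto n u" "j < n"
  shows "inner (u j) (\<Sum>i<n. a i *\<^sub>R u i) = a j"
proof -
  have "inner (u j) (\<Sum>i<n. a i *\<^sub>R u i) = (\<Sum>i<n. a i * inner (u j) (u i))"
    by (simp add: inner_sum_right)
  also have "\<dots> = (\<Sum>i<n. if i = j then a i else 0)"
    using assms by (intro sum.cong) (auto simp: orthonormal_uptoD)
  finally show ?thesis
    using assms(2) by simp
qed

lemma orthonormal_upto_exists:
  assumes "\<not> (\<exists>B::'a::real_inner set. finite B \<and> span B = UNIV)"
  shows "\<exists>e::nat \<Rightarrow> 'a. orthonormal_upto n e"
proof (induction n)
  case 0
  then show ?case by (simp add: orthonormal_upto_def)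
next
  case (Suc n)
  then obtain e :: "nat \<Rightarrow> 'a" where e: "orthonormal_upto n e"
    by blast
  obtain a where a: "a \<notin> span (e ` {..<n})"
    using assms by blast
  define b where "b = a - (\<Sum>i<n. inner (e i) a *\<^sub>R e i)"
  have "(\<Sum>i<n. inner (e i) a *\<^sub>R e i) \<in> span (e ` {..<n})"
    by (intro span_sum span_scale span_base) auto
  then have "b \<noteq> 0"
    using a by (auto simp: b_def)
  have b_orth: "inner (e j) b = 0" if "j < n" for j
    using inner_orthonormal_sum[OF e that] by (simp add: b_def inner_diff_right)
  have "orthonormal_upto (Suc n) (e(n := b /\<^sub>R norm b))"
    unfolding orthonormal_upto_def
  proof (intro allI impI)
    fix i j
    assume "i < Suc n" "j < Suc n"
    then consider "i < n" "j < n" | "i = n" "j < n" | "i < n" "j = n" | "i = n" "j = n"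
      by linarith
    then show "inner ((e(n := b /\<^sub>R norm b)) i) ((e(n := b /\<^sub>R norm b)) j) = (if i = j then 1 else 0)"
    proof cases
      case 1
      then show ?thesis using e by (simp add: orthonormal_uptoD)
    next
      case 2
      then show ?thesis using b_orth[of j] by (simp add: inner_commute)
    next
      case 3
      then show ?thesis using b_orth[of i] by simp
    next
      case 4
      then show ?thesis using \<open>b \<noteq> 0\<close> by (simp flip: power2_norm_eq_inner)
    qed
  qed
  then show ?case by blast
qed

lemma adjoint_op_eqI:
  assumes "\<And>x y. inner (f x) y = inner x (g y)"
  shows "adjoint_op f = g"
proof
  fix y
  have "\<exists>g. \<forall>x y. inner (f x) y = inner x (g y)"
    using assms by blast
  then have adj: "\<forall>x y. inner (f x) y = inner x (adjoint_op f y)"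
    unfolding adjoint_op_def by (rule someI_ex)
  have "inner (adjoint_op f y - g y) (adjoint_op f y - g y) = 0"
    using adj assms by (simp add: inner_diff_right inner_diff_left)
  then show "adjoint_op f y = g y"
    by simp
qed

lemma adjoint_finite_rank_op: "adjoint_op (finite_rank_op n e u s) = finite_rank_op n u e s"
  by (rule adjoint_op_eqI)
     (simp add: finite_rank_op_def inner_sum_left inner_sum_right inner_commute mult_ac)

lemma finite_rank_op_basis:
  assumes "orthonormal_upto n e" "j < n"
  shows "finite_rank_op n e u s (e j) = s j *\<^sub>R u j"
proof -
  have "finite_rank_op n e u s (e j) = (\<Sum>i<n. if i = j then s i *\<^sub>R u i else 0)"
    unfolding finite_rank_op_def using assms by (intro sum.cong) (auto simp: orthonormal_uptoD)
  with assms(2) show ?thesis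
    by simp
qed

lemma finite_rank_op_comp:
  assumes "orthonormal_upto n u"
  shows "finite_rank_op n u e t (finite_rank_op n e u s x) = finite_rank_op n e e (\<lambda>i. t i * s i) x"
  unfolding finite_rank_op_def [of n u e] finite_rank_op_def [of n e e]
  by (intro sum.cong refl) (simp add: finite_rank_op_def inner_orthonormal_sum[OF assms] mult_ac)

lemma finite_rank_op_in_span: "finite_rank_op n e u s x \<in> span (u ` {..<n})"
  unfolding finite_rank_op_def by (intro span_sum span_scale span_base) auto

lemma finite_rank_op_fixed_iff_in_span:
  assumes e: "orthonormal_upto n e"
  shows "finite_rank_op n e e (\<lambda>_. 1) x = x \<longleftrightarrow> x \<in> span (e ` {..<n})"
proof
  assume "finite_rank_op n e e (\<lambda>_. 1) x = x"
  then show "x \<in> span (e ` {..<n})"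
    using finite_rank_op_in_span[of n e e "\<lambda>_. 1" x] by simp
next
  have lin: "linear (finite_rank_op n e e (\<lambda>_. 1))"
    by (rule linearI) (simp_all add: finite_rank_op_def inner_add_right scaleR_add_left
                         sum.distrib scaleR_sum_right)
  assume "x \<in> span (e ` {..<n})"
  then show "finite_rank_op n e e (\<lambda>_. 1) x = x"
    by (induction rule: span_induct)
       (use lin in \<open>auto simp: subspace_def linear_0 linear_add linear_scale finite_rank_op_basis[OF e]\<close>)
qed

lemma dim_orthonormal_upto:
  assumes e: "orthonormal_upto n e"
  shows "dim (e ` {..<n}) = n"
proof -
  have "independent (e ` {..<n})"
    using e by (intro pairwise_orthogonal_independent)
      (auto simp: pairwise_def orthogonal_def orthonormal_uptoD dest: norm_orthonormal_upto)
  moreover have "inj_on e {..<n}"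
    using e by (intro inj_onI) (metis lessThan_iff orthonormal_uptoD zero_neq_one)
  ultimately show ?thesis
    by (simp add: dim_eq_card_independent card_image)
qed

lemma eigsp_sq_finite_rank_op:
  assumes e: "orthonormal_upto n e" and u: "orthonormal_upto n u"
    and s: "\<forall>i<n. \<bar>s i\<bar> = b" and \<mu>: "0 < \<mu>"
  shows "eigsp_sq (finite_rank_op n e u s) \<mu> = (if \<mu> = b\<^sup>2 then span (e ` {..<n}) else {0})"
proof -
  let ?P = "finite_rank_op n e e (\<lambda>_. 1)"
  have "finite_rank_op n e e (\<lambda>i. s i * s i) x = b\<^sup>2 *\<^sub>R ?P x" for x
    unfolding finite_rank_op_def scaleR_sum_right
    by (intro sum.cong refl) (use s in \<open>auto simp flip: power2_eq_square abs_mult_self_eq\<close>)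
  then have eig: "eigsp_sq (finite_rank_op n e u s) \<mu> = {x. b\<^sup>2 *\<^sub>R ?P x = \<mu> *\<^sub>R x}"
    by (simp add: eigsp_sq_def adjoint_finite_rank_op finite_rank_op_comp[OF u])
  show ?thesis
  proof (cases "\<mu> = b\<^sup>2")
    case True
    with \<mu> show ?thesis
      unfolding eig by (simp add: finite_rank_op_fixed_iff_in_span[OF e])
  next
    case False
    have "x = 0" if x: "b\<^sup>2 *\<^sub>R ?P x = \<mu> *\<^sub>R x" for x
    proof -
      have x_eq: "(1 / \<mu>) *\<^sub>R (b\<^sup>2 *\<^sub>R ?P x) = x"
        using \<mu> by (simp add: x)
      have "(1 / \<mu>) *\<^sub>R (b\<^sup>2 *\<^sub>R ?P x) \<in> span (e ` {..<n})"
        by (intro span_scale finite_rank_op_in_span)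
      then have "x \<in> span (e ` {..<n})"
        by (simp only: x_eq)
      then have "?P x = x"
        by (simp add: finite_rank_op_fixed_iff_in_span[OF e])
      then have "(b\<^sup>2 - \<mu>) *\<^sub>R x = 0"
        using x by (simp add: algebra_simps)
      with False show "x = 0"
        by simp
    qed
    moreover have "?P 0 = 0"
      by (simp add: finite_rank_op_def)
    ultimately show ?thesis
      using False by (auto simp: eig)
  qed
qed

lemma sv_count_finite_rank_op:
  assumes e: "orthonormal_upto n e" and u: "orthonormal_upto n u"
    and s: "\<forall>i<n. \<bar>s i\<bar> = b" and t: "0 < t"
  shows "sv_count (finite_rank_op n e u s) t = (if t \<le> b\<^sup>2 then n else 0)"
proof -
  have eig: "eigsp_sq (finite_rank_op n e u s) \<mu> = (if \<mu> = b\<^sup>2 then span (e ` {..<n}) else {0})"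
    if "t \<le> \<mu>" for \<mu>
    using eigsp_sq_finite_rank_op[OF e u s] t that by simp
  have "(\<exists>x. x \<noteq> 0 \<and> x \<in> span (e ` {..<n})) \<longleftrightarrow> 0 < n"
    using norm_orthonormal_upto[OF e, of 0] by (cases n) (auto intro!: exI[of _ "e 0"] span_base)
  then have "{\<mu>. t \<le> \<mu> \<and> (\<exists>x. x \<noteq> 0 \<and> x \<in> eigsp_sq (finite_rank_op n e u s) \<mu>)}
      = (if t \<le> b\<^sup>2 \<and> 0 < n then {b\<^sup>2} else {})"
    by (auto simp: eig split: if_splits)
  then show ?thesis
    by (simp add: sv_count_def eig dim_orthonormal_upto[OF e])
qed

lemma singular_value_finite_rank_op:
  assumes e: "orthonormal_upto n e" and u: "orthonormal_upto n u"
    and s: "\<forall>i<n. \<bar>s i\<bar> = b" and b: "0 \<le> b"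
  shows "singular_value (finite_rank_op n e u s) k = (if k < n then b else 0)"
proof -
  let ?S = "{t. 0 < t \<and> Suc k \<le> sv_count (finite_rank_op n e u s) t}"
  have "t \<in> ?S \<longleftrightarrow> t \<in> (if k < n then {0<..b\<^sup>2} else {})" for t
    by (cases "0 < t") (simp_all add: sv_count_finite_rank_op[OF e u s])
  then have S: "?S = (if k < n then {0<..b\<^sup>2} else {})"
    by blast
  have "Sup (?S \<union> {0}) = (if k < n then b\<^sup>2 else 0)"
  proof (cases "k < n")
    case True
    then have "?S \<union> {0} = {0..b\<^sup>2}"
      unfolding S using ivl_disj_un_singleton(5)[of 0 "b\<^sup>2"] by auto
    then show ?thesis
      using True by simp
  qed (simp add: S)
  with b show ?thesis
    by (simp add: singular_value_def)
qed

lemma compact_bounded_combinations: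
  fixes w :: "nat \<Rightarrow> 'a::real_normed_vector"
  shows "compact {\<Sum>i<n. r i *\<^sub>R w i | r. \<forall>i. \<bar>r i\<bar> \<le> B}"
proof (cases "0 \<le> B")
  case False
  then have "{\<Sum>i<n. r i *\<^sub>R w i | r. \<forall>i. \<bar>r i\<bar> \<le> B} = {}"
    by (auto dest: spec[of _ 0])
  then show ?thesis
    by (simp only: compact_empty)
next
  case True
  show ?thesis
  proof (induction n)
    case 0
    have "{\<Sum>i<0. r i *\<^sub>R w i | r. \<forall>i. \<bar>r i\<bar> \<le> B} = {0}"
      using True by (auto intro!: exI[of _ "\<lambda>_. 0"])
    then show ?case
      by simp
  next
    case (Suc n)
    let ?K = "\<lambda>n. {\<Sum>i<n. r i *\<^sub>R w i | r. \<forall>i. \<bar>r i\<bar> \<le> B}"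
    let ?S = "(\<lambda>x. x *\<^sub>R w n) ` {-B..B}"
    have "?K (Suc n) = {x + y | x y. x \<in> ?K n \<and> y \<in> ?S}"
    proof (intro set_eqI iffI)
      fix z
      assume "z \<in> ?K (Suc n)"
      then obtain r where r: "\<forall>i. \<bar>r i\<bar> \<le> B" "z = (\<Sum>i<n. r i *\<^sub>R w i) + r n *\<^sub>R w n"
        by auto
      moreover have "r n *\<^sub>R w n \<in> ?S"
        using r(1)[rule_format, of n] by (intro imageI) (auto simp: abs_le_iff)
      ultimately show "z \<in> {x + y | x y. x \<in> ?K n \<and> y \<in> ?S}"
        by blast
    next
      fix z
      assume "z \<in> {x + y | x y. x \<in> ?K n \<and> y \<in> ?S}"
      then obtain r t where r: "\<forall>i. \<bar>r i\<bar> \<le> B" "t \<in> {-B..B}"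
          and z: "z = (\<Sum>i<n. r i *\<^sub>R w i) + t *\<^sub>R w n"
        by blast
      have "z = (\<Sum>i<Suc n. (r(n := t)) i *\<^sub>R w i)"
        unfolding z by (auto intro: sum.cong)
      moreover have "\<forall>i. \<bar>(r(n := t)) i\<bar> \<le> B"
        using r by auto
      ultimately show "z \<in> ?K (Suc n)"
        by blast
    qed
    moreover have "compact ?S"
      by (intro compact_continuous_image continuous_intros) auto
    ultimately show ?case
      using Suc by (simp only: compact_sums)
  qed
qed

lemma compact_op_finite_rank_op: "compact_op (finite_rank_op n e u s)"
proof -
  define B where "B = (\<Sum>i<n. \<bar>s i\<bar> * norm (e i))"
  let ?K = "{\<Sum>i<n. r i *\<^sub>R u i | r. \<forall>i. \<bar>r i\<bar> \<le> B}"
  have "finite_rank_op n e u s x \<in> ?K" if "norm x \<le> 1" for x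
  proof -
    define r where "r i = (if i < n then s i * inner (e i) x else 0)" for i
    have "\<bar>r i\<bar> \<le> B" for i
    proof (cases "i < n")
      case True
      have "\<bar>inner (e i) x\<bar> \<le> norm (e i)"
        using Cauchy_Schwarz_ineq2[of "e i" x] mult_left_le[OF that, of "norm (e i)"] by simp
      then have "\<bar>s i * inner (e i) x\<bar> \<le> \<bar>s i\<bar> * norm (e i)"
        by (simp add: abs_mult mult_left_mono)
      also have "\<dots> \<le> B"
        unfolding B_def using True by (intro member_le_sum) auto
      finally show ?thesis
        using True by (simp add: r_def)
    qed (simp add: r_def B_def sum_nonneg)
    moreover have "finite_rank_op n e u s x = (\<Sum>i<n. r i *\<^sub>R u i)"
      by (simp add: finite_rank_op_def r_def)
    ultimately show ?thesis
      by blast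
  qed
  then have "closure (finite_rank_op n e u s ` cball 0 1) \<subseteq> ?K"
    by (intro closure_minimal compact_imp_closed compact_bounded_combinations) auto
  then have "compact (closure (finite_rank_op n e u s ` cball 0 1))"
    using closed_Int_compact[OF closed_closure compact_bounded_combinations,
        of "finite_rank_op n e u s ` cball 0 1" u n B]
    by (simp add: Int_absorb2)
  moreover have "bounded_linear (finite_rank_op n e u s)"
    unfolding finite_rank_op_def [abs_def]
    by (intro bounded_linear_sum bounded_linear_compose[OF bounded_linear_scaleR_left]
          bounded_linear_compose[OF bounded_linear_mult_right] bounded_linear_inner_right)
  ultimately show ?thesis
    by (simp add: compact_op_def)
qed

lemma schatten_norm_le_of_singular_values:
  assumes sv: "\<And>k. singular_value f k = (if k < n then b else 0)"
    and b: "0 \<le> b" and p: "1 \<le> p"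
  shows "schatten_norm p f
           \<le> ereal (if p = \<infinity> then b else (real n * b powr real_of_ereal p) powr (1 / real_of_ereal p))"
proof (cases "p = \<infinity>")
  case True
  with b show ?thesis
    by (auto simp: schatten_norm_def sv intro!: SUP_least)
next
  case False
  then obtain q where q: "p = ereal q" "1 \<le> q"
    using p by (cases p) auto
  have "(\<lambda>k. singular_value f k powr q) = (\<lambda>k. if k \<in> {..<n} then b powr q else 0)"
    using q by (auto simp: sv)
  then have "(\<lambda>k. singular_value f k powr q) sums (real n * b powr q)"
    using sums_If_finite_set[of "{..<n}" "\<lambda>_. b powr q"] by simp
  with q show ?thesis
    by (simp add: schatten_norm_def sums_summable sums_unique[symmetric])
qed

lemma finite_rank_op_in_schatten_ball:
  assumes e: "orthonormal_upto n e" and u: "orthonormal_upto n u"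
    and s: "\<forall>i<n. \<bar>s i\<bar> = b" and b: "0 \<le> b" and p: "1 \<le> p"
    and small: "if p = \<infinity> then b \<le> c else (real n * b powr real_of_ereal p) powr (1 / real_of_ereal p) \<le> c"
  shows "finite_rank_op n e u s \<in> schatten_ball p c"
proof -
  have "schatten_norm p (finite_rank_op n e u s)
      \<le> ereal (if p = \<infinity> then b else (real n * b powr real_of_ereal p) powr (1 / real_of_ereal p))"
    by (rule schatten_norm_le_of_singular_values[OF singular_value_finite_rank_op[OF e u s b] b p])
  also have "\<dots> \<le> ereal c"
    using small by (cases "p = \<infinity>") simp_all
  finally show ?thesis
    using compact_op_finite_rank_op
    by (auto simp: schatten_ball_def schatten_class_def intro: le_less_trans)
qed

lemma integrable_sq_dist_bounded:
  assumes "finite_measure M" "P \<in> borel_measurable M" "\<forall>\<omega>\<in>space M. norm (P \<omega>) \<le> B"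
  shows "integrable M (\<lambda>\<omega>. (norm (P \<omega> - y))\<^sup>2)"
proof (rule finite_measure.integrable_const_bound[OF assms(1), where B = "(B + norm y)\<^sup>2"])
  show "AE \<omega> in M. norm ((norm (P \<omega> - y))\<^sup>2) \<le> (B + norm y)\<^sup>2"
  proof (rule AE_I2)
    fix \<omega>
    assume "\<omega> \<in> space M"
    then have "norm (P \<omega> - y) \<le> B + norm y"
      using assms(3) norm_triangle_ineq4[of "P \<omega>" y] by fastforce
    then show "norm ((norm (P \<omega> - y))\<^sup>2) \<le> (B + norm y)\<^sup>2"
      by (simp add: power_mono)
  qed
qed (intro borel_measurable_continuous_on[OF _ assms(2), where f = "\<lambda>z. (norm (z - y))\<^sup>2"]
       continuous_intros)

lemma expected_sq_dist_ge:
  assumes M: "prob_space M" and P: "P \<in> borel_measurable M" "\<forall>\<omega>\<in>space M. norm (P \<omega>) \<le> B"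
    and uncorrelated: "(\<integral>\<omega>. inner (P \<omega>) y \<partial>M) \<le> 0"
  shows "(norm y)\<^sup>2 \<le> (\<integral>\<omega>. (norm (P \<omega> - y))\<^sup>2 \<partial>M)"
proof -
  interpret prob_space M by (rule M)
  have int_inner: "integrable M (\<lambda>\<omega>. inner (P \<omega>) y)"
  proof (rule integrable_const_bound[where B = "B * norm y"])
    show "AE \<omega> in M. norm (inner (P \<omega>) y) \<le> B * norm y"
    proof (rule AE_I2)
      fix \<omega>
      assume "\<omega> \<in> space M"
      then have "norm (P \<omega>) * norm y \<le> B * norm y"
        using P(2) by (simp add: mult_right_mono)
      then show "norm (inner (P \<omega>) y) \<le> B * norm y"
        using Cauchy_Schwarz_ineq2[of "P \<omega>" y] by simp
    qed
  qed (intro borel_measurable_continuous_on[OF _ P(1), where f = "\<lambda>z. inner z y"]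
         continuous_intros)
  have expand: "(norm (P \<omega> - y))\<^sup>2 = (norm (P \<omega>))\<^sup>2 - 2 * inner (P \<omega>) y + (norm y)\<^sup>2" for \<omega>
    by (simp add: power2_norm_eq_inner inner_diff_left inner_diff_right inner_commute)
  have "(norm y)\<^sup>2 - 2 * inner (P \<omega>) y \<le> (norm (P \<omega> - y))\<^sup>2" for \<omega>
    using expand[of \<omega>] zero_le_power2[of "norm (P \<omega>)"] by linarith
  then have "(\<integral>\<omega>. (norm y)\<^sup>2 - 2 * inner (P \<omega>) y \<partial>M) \<le> (\<integral>\<omega>. (norm (P \<omega> - y))\<^sup>2 \<partial>M)"
    using int_inner integrable_sq_dist_bounded[OF finite_measure_axioms P]
    by (intro integral_mono) auto
  moreover have "(\<integral>\<omega>. (norm y)\<^sup>2 - 2 * inner (P \<omega>) y \<partial>M) = (norm y)\<^sup>2 - 2 * (\<integral>\<omega>. inner (P \<omega>) y \<partial>M)"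
    using int_inner by (simp add: prob_space)
  ultimately show ?thesis
    using uncorrelated by linarith
qed

lemma adaptive_sign_labels:
  fixes v :: "nat \<Rightarrow> 'w::real_inner"
  assumes M: "prob_space M" and A: "online_algorithm M c A"
  shows "\<exists>\<sigma>. (\<forall>t. \<bar>\<sigma> t\<bar> = 1) \<and>
    (\<forall>t. (norm (v t))\<^sup>2
      \<le> (\<integral>\<omega>. (norm (A \<omega> (history xs (\<lambda>t. \<sigma> t *\<^sub>R v t) t) (xs t) - \<sigma> t *\<^sub>R v t))\<^sup>2 \<partial>M))"
proof -
  define sign where
    "sign l t = (if (\<integral>\<omega>. inner (A \<omega> l (xs t)) (v t) \<partial>M) \<le> 0 then 1 else - 1 :: real)" for l t
  define hist where "hist = rec_nat [] (\<lambda>t l. l @ [(xs t, sign l t *\<^sub>R v t)])"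
  define \<sigma> where "\<sigma> t = sign (hist t) t" for t
  have hist_Suc: "hist (Suc t) = hist t @ [(xs t, \<sigma> t *\<^sub>R v t)]" for t
    by (simp add: hist_def \<sigma>_def)
  have hist: "hist t = history xs (\<lambda>t. \<sigma> t *\<^sub>R v t) t" for t
  proof (induction t)
    case 0
    show ?case
      by (simp add: hist_def history_def)
  next
    case (Suc t)
    then show ?case
      by (simp add: hist_Suc history_def)
  qed
  have \<sigma>_history: "\<sigma> t = sign (history xs (\<lambda>t. \<sigma> t *\<^sub>R v t) t) t" for t
    using \<sigma>_def[of t] unfolding hist .
  have \<sigma>_abs: "\<bar>\<sigma> t\<bar> = 1" for t
    by (simp add: \<sigma>_def sign_def)
  show ?thesis
  proof (intro exI conjI allI)
    show "\<bar>\<sigma> t\<bar> = 1" for t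
      by (rule \<sigma>_abs)
    fix t
    let ?P = "\<lambda>\<omega>. A \<omega> (history xs (\<lambda>t. \<sigma> t *\<^sub>R v t) t) (xs t)"
    have "(\<integral>\<omega>. inner (?P \<omega>) (\<sigma> t *\<^sub>R v t) \<partial>M) = \<sigma> t * (\<integral>\<omega>. inner (?P \<omega>) (v t) \<partial>M)"
      by simp
    also have "\<dots> \<le> 0"
      by (subst \<sigma>_history) (simp add: sign_def mult_nonpos_nonneg)
    finally have "(norm (\<sigma> t *\<^sub>R v t))\<^sup>2 \<le> (\<integral>\<omega>. (norm (?P \<omega> - \<sigma> t *\<^sub>R v t))\<^sup>2 \<partial>M)"
      using A unfolding online_algorithm_def by (intro expected_sq_dist_ge[OF M]) auto
    then show "(norm (v t))\<^sup>2 \<le> (\<integral>\<omega>. (norm (?P \<omega> - \<sigma> t *\<^sub>R v t))\<^sup>2 \<partial>M)"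
      by (simp add: \<sigma>_abs)
  qed
qed

lemma regret_ge_finite_rank_ops:
  fixes A :: "'r \<Rightarrow> ('v::real_inner \<times> 'w::real_inner) list \<Rightarrow> 'v \<Rightarrow> 'w"
  assumes M: "prob_space M" and A: "online_algorithm M c A"
    and e: "orthonormal_upto T e" and u: "orthonormal_upto T u" and b: "0 \<le> b" "b \<le> c"
    and F: "\<And>\<sigma>. \<forall>i<T. \<bar>\<sigma> i\<bar> = 1 \<Longrightarrow> finite_rank_op T e u (\<lambda>i. b * \<sigma> i) \<in> F"
  shows "ereal (real T * b * c) \<le> regret M c A T F"
proof -
  interpret prob_space M
    by (rule M)
  obtain \<sigma> where \<sigma>: "\<forall>t. \<bar>\<sigma> t\<bar> = 1" and adversary: "\<forall>t. (norm (c *\<^sub>R u t))\<^sup>2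
      \<le> (\<integral>\<omega>. (norm (A \<omega> (history e (\<lambda>t. \<sigma> t *\<^sub>R c *\<^sub>R u t) t) (e t) - \<sigma> t *\<^sub>R c *\<^sub>R u t))\<^sup>2 \<partial>M)"
    using adaptive_sign_labels[OF M A, of "\<lambda>t. c *\<^sub>R u t" e] by blast
  define ys where "ys = (\<lambda>t. \<sigma> t *\<^sub>R c *\<^sub>R u t)"
  define loss where "loss t \<omega> = (norm (A \<omega> (history e ys t) (e t) - ys t))\<^sup>2" for t \<omega>
  have norm_ys: "norm (ys t) = c" if "t < T" for t
    using \<sigma> b norm_orthonormal_upto[OF u that] by (simp add: ys_def abs_mult)
  have expected_loss: "c\<^sup>2 \<le> (\<integral>\<omega>. loss t \<omega> \<partial>M)" if "t < T" for t
    using adversary[rule_format, of t] b norm_orthonormal_upto[OF u that]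
    by (simp add: loss_def ys_def abs_mult)
  have integrable_loss: "integrable M (loss t)" for t
    using A unfolding loss_def online_algorithm_def
    by (intro integrable_sq_dist_bounded[OF finite_measure_axioms]) auto
  define f where "f = finite_rank_op T e u (\<lambda>i. b * \<sigma> i)"
  have "(norm (f (e t) - ys t))\<^sup>2 = (c - b)\<^sup>2" if "t < T" for t
  proof -
    have "f (e t) - ys t = (\<sigma> t * (b - c)) *\<^sub>R u t"
      by (simp add: f_def ys_def finite_rank_op_basis[OF e that] algebra_simps)
    then show ?thesis
      using \<sigma> norm_orthonormal_upto[OF u that] by (simp add: abs_mult power2_commute)
  qed
  then have "(INF g\<in>F. \<Sum>t<T. (norm (g (e t) - ys t))\<^sup>2) \<le> real T * (c - b)\<^sup>2"
    using F[of \<sigma>] \<sigma> cINF_lower[of "\<lambda>g. \<Sum>t<T. (norm (g (e t) - ys t))\<^sup>2" F f]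
    by (simp add: f_def bdd_below_def) (meson sum_nonneg zero_le_power2)
  moreover have "(\<integral>\<omega>. (\<Sum>t<T. loss t \<omega>) \<partial>M) \<ge> real T * c\<^sup>2"
    using sum_mono[of "{..<T}" "\<lambda>_. c\<^sup>2" "\<lambda>t. \<integral>\<omega>. loss t \<omega> \<partial>M"] expected_loss integrable_loss
    by (simp add: Bochner_Integration.integral_sum)
  moreover have "real T * c\<^sup>2 - real T * (c - b)\<^sup>2 = real T * b * c + real T * b * (c - b)"
    by (simp add: power2_eq_square algebra_simps)
  moreover have "0 \<le> real T * b * (c - b)"
    using b by simp
  ultimately have "real T * b * c
      \<le> (\<integral>\<omega>. (\<Sum>t<T. loss t \<omega>) - (INF g\<in>F. \<Sum>t<T. (norm (g (e t) - ys t))\<^sup>2) \<partial>M)"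
    using integrable_loss by (simp add: prob_space)
  moreover have "(e, ys) \<in> {(xs, ys). \<forall>t<T. norm (xs t) \<le> 1 \<and> norm (ys t) \<le> c}"
    using norm_orthonormal_upto[OF e] norm_ys by auto
  ultimately show ?thesis
    unfolding regret_def loss_def by (force intro: SUP_upper2)
qed

lemma regret_schatten_ball_ge:
  fixes A :: "'r \<Rightarrow> ('v::real_inner \<times> 'w::real_inner) list \<Rightarrow> 'v \<Rightarrow> 'w"
  assumes infV: "\<not> (\<exists>B::'v set. finite B \<and> span B = UNIV)"
    and infW: "\<not> (\<exists>B::'w set. finite B \<and> span B = UNIV)"
    and c: "0 < c" and p: "1 \<le> p" and M: "prob_space M" and A: "online_algorithm M c A"
  shows "ereal (c\<^sup>2 * real T powr (if p = \<infinity> then 1 else 1 - 1 / real_of_ereal p))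
           \<le> regret M c A T (schatten_ball p c)"
proof -
  obtain e :: "nat \<Rightarrow> 'v" where e: "orthonormal_upto T e"
    using orthonormal_upto_exists[OF infV] by blast
  obtain u :: "nat \<Rightarrow> 'w" where u: "orthonormal_upto T u"
    using orthonormal_upto_exists[OF infW] by blast
  define q where "q = real_of_ereal p"
  have q: "1 \<le> q" "p = ereal q" if "p \<noteq> \<infinity>"
    using p that unfolding q_def by (cases p; simp)+
  \<comment> \<open>the comparators have Schatten \<open>p\<close>-norm \<open>T\<^sup>1\<^sup>/\<^sup>p b = c\<close>\<close>
  define b where "b = (if p = \<infinity> then c else c * real T powr (- 1 / q))"
  have b: "0 \<le> b" "b \<le> c"
  proof -
    have "real T powr (- 1 / q) \<le> real T powr 0" if "p \<noteq> \<infinity>" "T \<noteq> 0"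
      using q[OF that(1)] that(2) by (intro powr_mono) auto
    then have "real T powr (- 1 / q) \<le> 1" if "p \<noteq> \<infinity>"
      using that by (cases "T = 0") auto
    then show "0 \<le> b" "b \<le> c"
      using c by (auto simp: b_def mult_left_le)
  qed
  have small: "(real T * b powr q) powr (1 / q) \<le> c" if "p \<noteq> \<infinity>"
  proof (cases "T = 0")
    case False
    have "b powr q = c powr q * (real T powr (- 1 / q)) powr q"
      using c by (simp add: b_def that powr_mult)
    also have "(real T powr (- 1 / q)) powr q = real T powr (- 1)"
      using q[OF that] by (subst powr_powr) simp
    also have "c powr q * real T powr (- 1) = c powr q / real T"
      using False by (simp add: powr_minus_divide)
    finally have "b powr q = c powr q / real T" .
    then show ?thesis
      using False q[OF that] c by (simp add: powr_powr)
  qed (use c in simp)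
  have "finite_rank_op T e u (\<lambda>i. b * \<sigma> i) \<in> schatten_ball p c" if "\<forall>i<T. \<bar>\<sigma> i\<bar> = 1" for \<sigma>
    using that b p small unfolding q_def
    by (intro finite_rank_op_in_schatten_ball[OF e u]) (auto simp: abs_mult)
  then have "ereal (real T * b * c) \<le> regret M c A T (schatten_ball p c)"
    by (rule regret_ge_finite_rank_ops[OF M A e u b])
  moreover have "real T * b * c = c\<^sup>2 * real T powr (if p = \<infinity> then 1 else 1 - 1 / q)"
    by (cases "T = 0")
       (auto simp: b_def power2_eq_square powr_diff powr_minus_divide)
  ultimately show ?thesis
    unfolding q_def[symmetric] by simp
qed

lemma not_online_learnable_by_if_linear_regret:
  assumes "0 < a" and linear: "\<And>T. ereal (a * real T) \<le> regret M c A T F"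
  shows "\<not> online_learnable_by M c F A"
proof
  assume "online_learnable_by M c F A"
  then have "(\<lambda>T. regret M c A T F / ereal (real T)) \<longlonglongrightarrow> 0"
    by (simp add: online_learnable_by_def)
  moreover have "ereal a \<le> regret M c A T F / ereal (real T)" if "1 \<le> T" for T
  proof -
    have "ereal (a * real T) / ereal (real T) \<le> regret M c A T F / ereal (real T)"
      using linear[of T] that by (intro ereal_divide_right_mono) auto
    moreover have "ereal (a * real T) / ereal (real T) = ereal a"
      using that by (simp add: divide_ereal_def)
    ultimately show ?thesis
      by simp
  qed
  ultimately have "ereal a \<le> 0"
    by (intro LIMSEQ_le_const) auto
  with \<open>0 < a\<close> show False
    by simp
qed

theorem theorem4:
  fixes M :: "'r measure"
    and A :: "'r \<Rightarrow> ('v::{real_inner, complete_space} \<times> 'w::{real_inner, complete_space}) list \<Rightarrow> 'v \<Rightarrow> 'w"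
    and c :: real and p :: ereal and T :: nat
  assumes sepV: "\<exists>D::'v set. countable D \<and> closure D = UNIV"
    and sepW: "\<exists>D::'w set. countable D \<and> closure D = UNIV"
    and infV: "\<not> (\<exists>B::'v set. finite B \<and> span B = UNIV)"
    and infW: "\<not> (\<exists>B::'w set. finite B \<and> span B = UNIV)"
    and c_pos: "c > 0"
    and p_ge: "1 \<le> p"
    and M: "prob_space M"
    and A: "online_algorithm M c A"
  shows "ereal (c\<^sup>2 * real T powr (if p = \<infinity> then 1 else 1 - 1 / real_of_ereal p))
           \<le> regret M c A T (schatten_ball p c)
         \<and> (p = \<infinity> \<longrightarrow> \<not> online_learnable_by M c (schatten_ball p c) A)"
proof (intro conjI impI)
  note bound = regret_schatten_ball_ge[OF infV infW c_pos p_ge M A]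
  show "ereal (c\<^sup>2 * real T powr (if p = \<infinity> then 1 else 1 - 1 / real_of_ereal p))
      \<le> regret M c A T (schatten_ball p c)"
    by (rule bound)
  assume "p = \<infinity>"
  then have "ereal (c\<^sup>2 * real n) \<le> regret M c A n (schatten_ball p c)" for n
    using bound[where T = n] by (cases "n = 0") auto
  then show "\<not> online_learnable_by M c (schatten_ball p c) A"
    using c_pos by (intro not_online_learnable_by_if_linear_regret[of "c\<^sup>2"]) auto
qed

end
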